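(* Let $(G,\phi,(g_1,\dots,g_n))$ be an $n$-expansion group. Then $\#G = \#L_\bullet(G) \leq 2^{n2^{n-1}-2^n+n+1}$. In particular, $\{g_1,\dots,g_n\}$ is a generating set for $G$.
   Context: $V_{[n]}=\mathbb{F}_2^n$ with basis $e_1,\dots,e_n$. An $n$-expansion group is a triple $(G,\phi,(g_1,\dots,g_n))$: $G$ a group, $\phi:G\to V_{[n]}$ a homomorphism with $\phi(g_i)=e_i$, $g_i^2=1$ for all $i$, $\ker\phi$ an elementary abelian $2$-group, and $[G,G]=\ker\phi$. With $G^{(1)}=G$, $G^{(i+1)}=[G,G^{(i)}]$, set $L_\bullet(G)=\bigoplus_{m\geq1}G^{(m)}/G^{(m+1)}$ (a set whose cardinality is $\#L_\bullet(G)$). *)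

theory Defs
  imports "HOL-Algebra.Algebra"
begin

text \<open>The group V_[n] = F_2^n, modelled as subsets of {1..n} under symmetric difference;
  the basis vector e_i is the singleton {i}.\<close>
definition Vn :: "nat \<Rightarrow> nat set monoid" where
  "Vn n = \<lparr>partial_object.carrier = Pow {1..n}, monoid.mult = (\<lambda>A B. (A - B) \<union> (B - A)), monoid.one = {}\<rparr>"

definition comm_subgroup :: "('a, 'b) monoid_scheme \<Rightarrow> 'a set \<Rightarrow> 'a set \<Rightarrow> 'a set" where
  "comm_subgroup G A B =
     generate G {a \<otimes>\<^bsub>G\<^esub> b \<otimes>\<^bsub>G\<^esub> inv\<^bsub>G\<^esub> a \<otimes>\<^bsub>G\<^esub> inv\<^bsub>G\<^esub> b | a b. a \<in> A \<and> b \<in> B}"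

text \<open>Lower central series, 0-indexed: lcs G k is G^(k+1) in the paper's notation.\<close>
fun lcs :: "('a, 'b) monoid_scheme \<Rightarrow> nat \<Rightarrow> 'a set" where
  "lcs G 0 = carrier G"
| "lcs G (Suc k) = comm_subgroup G (carrier G) (lcs G k)"

text \<open>The underlying set of the direct sum L(G) = (+)_{m>=1} G^(m)/G^(m+1):
  finitely supported families x with x m a coset of G^(m+1) in G^(m) for m >= 1
  (entry at index 0 fixed to the empty set).\<close>
definition Lbul :: "('a, 'b) monoid_scheme \<Rightarrow> (nat \<Rightarrow> 'a set) set" where
  "Lbul G = {x. x 0 = {} \<and>
     (\<forall>m\<ge>1. x m \<in> rcosets\<^bsub>G\<lparr>carrier := lcs G (m - 1)\<rparr>\<^esub> (lcs G m)) \<and>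
     finite {m. m \<ge> 1 \<and> x m \<noteq> lcs G m}}"

definition expansion_group ::
  "nat \<Rightarrow> ('a, 'b) monoid_scheme \<Rightarrow> ('a \<Rightarrow> nat set) \<Rightarrow> (nat \<Rightarrow> 'a) \<Rightarrow> bool" where
  "expansion_group n G \<phi> g \<longleftrightarrow>
     group G \<and> \<phi> \<in> hom G (Vn n) \<and>
     (\<forall>i\<in>{1..n}. g i \<in> carrier G \<and> \<phi> (g i) = {i} \<and> g i \<otimes>\<^bsub>G\<^esub> g i = \<one>\<^bsub>G\<^esub>) \<and>
     (\<forall>x\<in>kernel G (Vn n) \<phi>. \<forall>y\<in>kernel G (Vn n) \<phi>. x \<otimes>\<^bsub>G\<^esub> y = y \<otimes>\<^bsub>G\<^esub> x) \<and>
     (\<forall>x\<in>kernel G (Vn n) \<phi>. x \<otimes>\<^bsub>G\<^esub> x = \<one>\<^bsub>G\<^esub>) \<and>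
     comm_subgroup G (carrier G) (carrier G) = kernel G (Vn n) \<phi>"

end

theory Submission
  imports Defs
begin

text \<open>
  The kernel K = ker \<phi> = [G, G] is an elementary abelian 2-group on which conjugation by g i
  acts through V_[n]; writing D i x = [g i, x], the operators D i on K commute and square to zero,
  so K is a module over F_2[x_1, ..., x_n]/(x_1^2, ..., x_n^2). Modulo K the group is generated
  by the g i, so [G, G] is generated by the commutators c i j = [g i, g j] together with the
  images D i K; iterating (words of length > n act trivially) K is spanned by the elements
  x_w c i j. The Jacobi identity D k c i j = D j c i k + D i c j k lets one move the least index
  into the commutator, leaving one spanning vector for each T \<subseteq> {1..n} and each j \<in> T
  other than min T, i.e. n 2^(n-1) - 2^n + 1 of them. Hence #K is at most 2 to that power and
  #G \<le> 2^n #K. The same operators show that G^(n+2) = 1, and then #L(G) = #G by Lagrange's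
  theorem along the lower central series.
\<close>

section \<open>Commutators and the lower central series\<close>

definition commutator :: "('a, 'b) monoid_scheme \<Rightarrow> 'a \<Rightarrow> 'a \<Rightarrow> 'a" where
  "commutator G a b = a \<otimes>\<^bsub>G\<^esub> b \<otimes>\<^bsub>G\<^esub> inv\<^bsub>G\<^esub> a \<otimes>\<^bsub>G\<^esub> inv\<^bsub>G\<^esub> b"

lemma comm_subgroup_eq:
  "comm_subgroup G A B = generate G {commutator G a b | a b. a \<in> A \<and> b \<in> B}"
  unfolding comm_subgroup_def commutator_def ..

definition lcs_factor :: "('a, 'b) monoid_scheme \<Rightarrow> nat \<Rightarrow> 'a set set" where
  "lcs_factor G m = rcosets\<^bsub>G\<lparr>carrier := lcs G (m - 1)\<rparr>\<^esub> (lcs G m)"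

lemma Lbul_eq:
  "Lbul G = {x. x 0 = {} \<and> (\<forall>m\<ge>1. x m \<in> lcs_factor G m) \<and> finite {m. m \<ge> 1 \<and> x m \<noteq> lcs G m}}"
  by (simp add: Lbul_def lcs_factor_def)

context group
begin

lemma inv_mult_cancel_left [simp]: "a \<in> carrier G \<Longrightarrow> b \<in> carrier G \<Longrightarrow> inv a \<otimes> (a \<otimes> b) = b"
  by (simp flip: m_assoc)

lemma mult_inv_cancel_left [simp]: "a \<in> carrier G \<Longrightarrow> b \<in> carrier G \<Longrightarrow> a \<otimes> (inv a \<otimes> b) = b"
  by (simp flip: m_assoc)

lemma commutator_closed [simp]:
  "a \<in> carrier G \<Longrightarrow> b \<in> carrier G \<Longrightarrow> commutator G a b \<in> carrier G"
  by (simp add: commutator_def)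

lemma inv_commutator:
  "a \<in> carrier G \<Longrightarrow> b \<in> carrier G \<Longrightarrow> inv (commutator G a b) = commutator G b a"
  by (simp add: commutator_def inv_mult_group m_assoc)

lemma commutator_one_left [simp]: "b \<in> carrier G \<Longrightarrow> commutator G \<one> b = \<one>"
  by (simp add: commutator_def)

lemma commutator_mult_left:
  "\<lbrakk>a \<in> carrier G; b \<in> carrier G; c \<in> carrier G\<rbrakk> \<Longrightarrow>
   commutator G (a \<otimes> b) c = a \<otimes> commutator G b c \<otimes> inv a \<otimes> commutator G a c"
  by (simp add: commutator_def m_assoc inv_mult_group)

lemma commutator_mult_right:
  "\<lbrakk>a \<in> carrier G; b \<in> carrier G; c \<in> carrier G\<rbrakk> \<Longrightarrow>
   commutator G a (b \<otimes> c) = commutator G a b \<otimes> (b \<otimes> commutator G a c \<otimes> inv b)"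
  by (simp add: commutator_def m_assoc inv_mult_group)

lemma commutator_inv_left:
  "\<lbrakk>a \<in> carrier G; b \<in> carrier G\<rbrakk> \<Longrightarrow>
   commutator G (inv a) b = inv a \<otimes> commutator G b a \<otimes> a"
  by (simp add: commutator_def m_assoc)

lemma conj_commutator:
  "\<lbrakk>a \<in> carrier G; b \<in> carrier G; c \<in> carrier G\<rbrakk> \<Longrightarrow>
   c \<otimes> commutator G a b \<otimes> inv c = commutator G (c \<otimes> a \<otimes> inv c) (c \<otimes> b \<otimes> inv c)"
  by (simp add: commutator_def m_assoc inv_mult_group)

lemma normal_if_generators_normalize:
  assumes N: "subgroup N G" and S: "S \<subseteq> carrier G" "generate G S = carrier G"
    and conj: "\<And>x h. x \<in> S \<Longrightarrow> h \<in> N \<Longrightarrow> x \<otimes> h \<otimes> inv x \<in> N"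
    and conj_inv: "\<And>x h. x \<in> S \<Longrightarrow> h \<in> N \<Longrightarrow> inv x \<otimes> h \<otimes> x \<in> N"
  shows "N \<lhd> G"
proof -
  note N_carrier = subgroup.mem_carrier[OF N]
  have "a \<otimes> h \<otimes> inv a \<in> N" if "a \<in> generate G S" "h \<in> N" for a h
    using that
  proof (induction arbitrary: h rule: generate.induct)
    case one thus ?case using N_carrier by simp
  next
    case (incl x) thus ?case using conj by blast
  next
    case (inv x) thus ?case using conj_inv S by auto
  next
    case (eng a b)
    have "a \<in> carrier G" "b \<in> carrier G"
      using eng.hyps generate_in_carrier[OF S(1)] by auto
    then have "a \<otimes> b \<otimes> h \<otimes> inv (a \<otimes> b) = a \<otimes> (b \<otimes> h \<otimes> inv b) \<otimes> inv a"
      using N_carrier[OF eng.prems] by (simp add: m_assoc inv_mult_group)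
    then show ?case using eng.IH eng.prems by simp
  qed
  then show ?thesis using N S(2) by (auto intro: normal_invI)
qed

lemma comm_subgroup_subset_normal:
  assumes N: "N \<lhd> G" and S: "S \<subseteq> carrier G" "generate G S = carrier G"
    and H: "H \<subseteq> carrier G" and gens: "\<And>x h. x \<in> S \<Longrightarrow> h \<in> H \<Longrightarrow> commutator G x h \<in> N"
  shows "comm_subgroup G (carrier G) H \<subseteq> N"
proof -
  interpret N: normal N G by (rule N)
  have "commutator G a h \<in> N" if "a \<in> generate G S" "h \<in> H" for a h
    using that(1)
  proof (induction rule: generate.induct)
    case one thus ?case using H that(2) by auto
  next
    case (incl x) thus ?case using gens that(2) by blast
  next
    case (inv x)
    have "x \<in> carrier G" "h \<in> carrier G" using inv S H that(2) by auto
    moreover have "commutator G h x \<in> N"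
      using inv_commutator \<open>x \<in> carrier G\<close> \<open>h \<in> carrier G\<close> gens[OF inv that(2)] N.m_inv_closed
      by metis
    ultimately show ?case by (simp add: commutator_inv_left N.inv_op_closed1)
  next
    case (eng a b)
    have "a \<in> carrier G" "b \<in> carrier G" "h \<in> carrier G"
      using eng.hyps generate_in_carrier[OF S(1)] H that(2) by auto
    then show ?case using eng.IH by (simp add: commutator_mult_left N.inv_op_closed2)
  qed
  then have "{commutator G a h | a h. a \<in> carrier G \<and> h \<in> H} \<subseteq> N"
    using S(2) by blast
  then show ?thesis
    unfolding comm_subgroup_eq by (rule generate_subgroup_incl[OF _ N.subgroup_axioms])
qed

lemma comm_subgroup_carrier_subset_normal:
  assumes N: "N \<lhd> G" and S: "S \<subseteq> carrier G" "generate G S = carrier G"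
    and gens: "\<And>x y. x \<in> S \<Longrightarrow> y \<in> S \<Longrightarrow> commutator G x y \<in> N"
  shows "comm_subgroup G (carrier G) (carrier G) \<subseteq> N"
proof (rule comm_subgroup_subset_normal[OF N S subset_refl])
  fix x a assume x: "x \<in> S" and a: "a \<in> carrier G"
  have "comm_subgroup G (carrier G) S \<subseteq> N"
    using comm_subgroup_subset_normal[OF N S] S(1) gens by blast
  then have "commutator G a x \<in> N"
    using a x by (auto simp: comm_subgroup_eq intro: generate.incl)
  then show "commutator G x a \<in> N"
    using inv_commutator[of a x] a x S(1) subgroup.m_inv_closed[OF normal_imp_subgroup[OF N]]
    by fastforce
qed

lemma lcs_normal: "lcs G m \<lhd> G"
proof (induction m)
  case 0 show ?case by (simp add: normal_self)
next
  case (Suc m)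
  interpret normal "lcs G m" G by (rule Suc.IH)
  have "c \<otimes> commutator G a b \<otimes> inv c \<in> {commutator G a b | a b. a \<in> carrier G \<and> b \<in> lcs G m}"
    if "a \<in> carrier G" "b \<in> lcs G m" "c \<in> carrier G" for a b c
  proof -
    have "c \<otimes> b \<otimes> inv c \<in> lcs G m" using that by (simp add: inv_op_closed2)
    then show ?thesis using that by (auto simp: conj_commutator)
  qed
  moreover have "{commutator G a b | a b. a \<in> carrier G \<and> b \<in> lcs G m} \<subseteq> carrier G"
    by auto
  ultimately show ?case
    unfolding lcs.simps comm_subgroup_eq by (intro normal_generateI) blast+
qed

lemma lcs_Suc_subset: "lcs G (Suc m) \<subseteq> lcs G m"
proof -
  interpret normal "lcs G m" G by (rule lcs_normal)
  have "commutator G a b \<in> lcs G m" if "a \<in> carrier G" "b \<in> lcs G m" for a b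
    using that by (simp add: commutator_def inv_op_closed2)
  then have "{commutator G a b | a b. a \<in> carrier G \<and> b \<in> lcs G m} \<subseteq> lcs G m"
    by blast
  then show ?thesis
    unfolding lcs.simps comm_subgroup_eq by (rule generate_subgroup_incl[OF _ subgroup_axioms])
qed

lemma lcs_antimono: "m \<le> k \<Longrightarrow> lcs G k \<subseteq> lcs G m"
  by (induction k rule: dec_induct) (use lcs_Suc_subset in blast)+

lemma card_lcs_factor:
  assumes "finite (carrier G)"
  shows "finite (lcs_factor G (Suc m))"
    and "card (lcs_factor G (Suc m)) * card (lcs G (Suc m)) = card (lcs G m)"
proof -
  let ?H = "G\<lparr>carrier := lcs G m\<rparr>"
  have H: "group ?H" by (rule subgroup_imp_group[OF normal_imp_subgroup[OF lcs_normal]])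
  have sub: "subgroup (lcs G (Suc m)) ?H"
    by (rule subgroup_incl[OF normal_imp_subgroup[OF lcs_normal] normal_imp_subgroup[OF lcs_normal]
          lcs_Suc_subset])
  have "finite (lcs G m)"
    using assms finite_subset normal_imp_subgroup[OF lcs_normal] subgroup.subset by metis
  then show "finite (lcs_factor G (Suc m))"
    using group.rcosets_subset_PowG[OF H sub] finite_subset by (fastforce simp: lcs_factor_def)
  show "card (lcs_factor G (Suc m)) * card (lcs G (Suc m)) = card (lcs G m)"
    using group.lagrange[OF H sub] by (simp add: order_def lcs_factor_def)
qed

lemma prod_card_lcs_factor:
  assumes "finite (carrier G)"
  shows "(\<Prod>m\<in>{1..k}. card (lcs_factor G m)) * card (lcs G k) = card (carrier G)"
proof (induction k)
  case (Suc k)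
  have "(\<Prod>m\<in>{1..Suc k}. card (lcs_factor G m)) * card (lcs G (Suc k))
      = (\<Prod>m\<in>{1..k}. card (lcs_factor G m)) * (card (lcs_factor G (Suc k)) * card (lcs G (Suc k)))"
    by (simp add: prod.nat_ivl_Suc' ac_simps del: lcs.simps)
  then show ?case using Suc.IH by (simp only: card_lcs_factor(2)[OF assms])
qed simp

lemma lcs_trivial_beyond:
  assumes "lcs G N = {\<one>}" and "N \<le> m"
  shows "lcs G m = {\<one>}"
  using lcs_antimono[OF assms(2)] assms(1) subgroup.one_closed[OF normal_imp_subgroup[OF lcs_normal]]
  by blast

lemma lcs_factor_trivial:
  assumes "lcs G N = {\<one>}" and "N < m"
  shows "lcs_factor G m = {lcs G m}"
  using lcs_trivial_beyond[OF assms(1), of m] lcs_trivial_beyond[OF assms(1), of "m - 1"] assms(2)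
  by (simp add: lcs_factor_def RCOSETS_def r_coset_def)

lemma bij_betw_Lbul_PiE:
  assumes nilpotent: "lcs G N = {\<one>}"
  shows "bij_betw (\<lambda>x. restrict x {1..N}) (Lbul G) (\<Pi>\<^sub>E m\<in>{1..N}. lcs_factor G m)"
proof -
  define ext where "ext y m = (if m = 0 then {} else if m \<le> N then y m else lcs G m)" for y m
  have tail: "x m = lcs G m" if "x \<in> Lbul G" "N < m" for x m
  proof -
    have "x m \<in> lcs_factor G m" using that by (simp add: Lbul_eq)
    then show ?thesis using lcs_factor_trivial[OF nilpotent that(2)] by simp
  qed
  show ?thesis
  proof (rule bij_betw_byWitness[of _ ext])
    show "\<forall>x\<in>Lbul G. ext (restrict x {1..N}) = x"
    proof
      fix x assume x: "x \<in> Lbul G"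
      have "x 0 = {}" using x by (simp add: Lbul_eq)
      then have "ext (restrict x {1..N}) m = x m" for m
        using tail[OF x, of m] by (simp add: ext_def)
      then show "ext (restrict x {1..N}) = x" by blast
    qed
    show "\<forall>y\<in>\<Pi>\<^sub>E m\<in>{1..N}. lcs_factor G m. restrict (ext y) {1..N} = y"
      by (auto simp: fun_eq_iff PiE_def extensional_def ext_def)
    show "(\<lambda>x. restrict x {1..N}) ` Lbul G \<subseteq> (\<Pi>\<^sub>E m\<in>{1..N}. lcs_factor G m)"
      by (auto simp: Lbul_eq)
    have "finite {m. 1 \<le> m \<and> ext y m \<noteq> lcs G m}" for y
      by (rule finite_subset[of _ "{1..N}"]) (auto simp: ext_def)
    then show "ext ` (\<Pi>\<^sub>E m\<in>{1..N}. lcs_factor G m) \<subseteq> Lbul G"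
      using lcs_factor_trivial[OF nilpotent]
      by (auto simp: Lbul_eq not_le ext_def)
  qed
qed

lemma card_Lbul:
  assumes fin: "finite (carrier G)" and nilpotent: "lcs G N = {\<one>}"
  shows "finite (Lbul G) \<and> card (Lbul G) = card (carrier G)"
proof -
  have "finite (\<Pi>\<^sub>E m\<in>{1..N}. lcs_factor G m)"
  proof (intro finite_PiE)
    show "finite (lcs_factor G m)" if "m \<in> {1..N}" for m
      using card_lcs_factor(1)[OF fin, of "m - 1"] that by simp
  qed simp
  moreover have "card (\<Pi>\<^sub>E m\<in>{1..N}. lcs_factor G m) = card (carrier G)"
    using prod_card_lcs_factor[OF fin, of N] by (simp add: card_PiE nilpotent)
  ultimately show ?thesis
    using bij_betw_Lbul_PiE[OF nilpotent] by (metis bij_betw_finite bij_betw_same_card)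
qed

end

context group
begin

lemma generate_insert_elementary_abelian:
  assumes H: "subgroup H G" and comm: "\<And>x y. x \<in> H \<Longrightarrow> y \<in> H \<Longrightarrow> x \<otimes> y = y \<otimes> x"
    and square: "\<And>x. x \<in> H \<Longrightarrow> x \<otimes> x = \<one>" and S: "S \<subseteq> H" and b: "b \<in> H"
  shows "generate G (insert b S) \<subseteq> generate G S \<union> (\<lambda>x. b \<otimes> x) ` generate G S"
proof -
  let ?U = "generate G S"
  note H_carrier = subgroup.mem_carrier[OF H]
  have U: "?U \<subseteq> H" using generate_subgroup_incl[OF S H] .
  define V where "V = {x \<in> H. x \<in> ?U \<or> b \<otimes> x \<in> ?U}"
  have "subgroup V G"
  proof (rule subgroupI)
    show "V \<subseteq> carrier G" using H_carrier by (auto simp: V_def)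
    show "V \<noteq> {}" using generate.one subgroup.one_closed[OF H] by (auto simp: V_def)
  next
    fix x assume "x \<in> V"
    moreover have "inv x = x" if "x \<in> H" using that square H_carrier inv_equality by metis
    ultimately show "inv x \<in> V" by (simp add: V_def)
  next
    fix x y assume x: "x \<in> V" and y: "y \<in> V"
    have xyH: "x \<in> H" "y \<in> H" "x \<otimes> y \<in> H" using x y subgroup.m_closed[OF H] by (auto simp: V_def)
    have carrier: "x \<in> carrier G" "y \<in> carrier G" "b \<in> carrier G" using xyH b H_carrier by auto
    have b_left: "b \<otimes> (x \<otimes> y) = (b \<otimes> x) \<otimes> y" using carrier by (simp add: m_assoc)
    also have "\<dots> = x \<otimes> (b \<otimes> y)" using carrier comm[OF b xyH(1)] by (simp add: m_assoc)
    finally have b_right: "b \<otimes> (x \<otimes> y) = x \<otimes> (b \<otimes> y)" .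
    have "(b \<otimes> x) \<otimes> (b \<otimes> y) = b \<otimes> (b \<otimes> (x \<otimes> y))" using carrier b_right by (simp add: m_assoc)
    also have "\<dots> = x \<otimes> y" using carrier square[OF b] by (simp flip: m_assoc)
    finally have b_twice: "x \<otimes> y = (b \<otimes> x) \<otimes> (b \<otimes> y)" ..
    have "x \<otimes> y \<in> ?U \<or> b \<otimes> (x \<otimes> y) \<in> ?U"
      using x y unfolding V_def mem_Collect_eq by (metis generate.eng b_left b_right b_twice)
    then show "x \<otimes> y \<in> V" unfolding V_def using xyH by blast
  qed
  moreover have "insert b S \<subseteq> V"
    using b square[OF b] U S generate.one generate.incl[of _ S G] by (auto simp: V_def)
  ultimately have "generate G (insert b S) \<subseteq> V" by (rule generate_subgroup_incl[rotated])
  also have "V \<subseteq> ?U \<union> (\<lambda>x. b \<otimes> x) ` ?U"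
  proof
    fix x assume "x \<in> V"
    moreover have "x = b \<otimes> (b \<otimes> x)" if "x \<in> H"
      using that b square[OF b] H_carrier by (simp flip: m_assoc)
    ultimately show "x \<in> ?U \<union> (\<lambda>x. b \<otimes> x) ` ?U" by (auto simp: V_def)
  qed
  finally show ?thesis .
qed

lemma card_generate_elementary_abelian:
  assumes H: "subgroup H G" and comm: "\<And>x y. x \<in> H \<Longrightarrow> y \<in> H \<Longrightarrow> x \<otimes> y = y \<otimes> x"
    and square: "\<And>x. x \<in> H \<Longrightarrow> x \<otimes> x = \<one>" and S: "finite S" "S \<subseteq> H"
  shows "finite (generate G S) \<and> card (generate G S) \<le> 2 ^ card S"
  using S
proof (induction S rule: finite_induct)
  case empty show ?case by (simp add: generate_empty)
next
  case (insert b S)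
  let ?U = "generate G S"
  have sub: "generate G (insert b S) \<subseteq> ?U \<union> (\<lambda>x. b \<otimes> x) ` ?U"
    using generate_insert_elementary_abelian[OF H comm square] insert.prems by simp
  have IH: "finite ?U" "card ?U \<le> 2 ^ card S" using insert.IH insert.prems by auto
  have fin: "finite (?U \<union> (\<lambda>x. b \<otimes> x) ` ?U)" using IH(1) by blast
  have "card (generate G (insert b S)) \<le> card (?U \<union> (\<lambda>x. b \<otimes> x) ` ?U)"
    by (rule card_mono[OF fin sub])
  also have "\<dots> \<le> card ?U + card ?U"
    using card_Un_le card_image_le[OF IH(1)] by (meson add_left_mono order_trans)
  also have "\<dots> \<le> 2 ^ card (insert b S)" using IH(2) insert.hyps by simp
  finally show ?case using finite_subset[OF sub fin] by blast
qed

end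

lemma sum_card_Pow: "finite A \<Longrightarrow> (\<Sum>T\<in>Pow A. card T) * 2 = card A * 2 ^ card A"
proof (induction A rule: finite_induct)
  case (insert a A)
  have card_insert: "card (insert a T) = Suc (card T)" if "T \<in> Pow A" for T
    using that insert.hyps finite_subset by (auto intro!: card_insert_disjoint)
  have inj: "inj_on (insert a) (Pow A)" using insert.hyps by (auto simp: inj_on_def)
  have "(\<Sum>T\<in>Pow (insert a A). card T) = (\<Sum>T\<in>Pow A. card T) + (\<Sum>T\<in>insert a ` Pow A. card T)"
    unfolding Pow_insert using insert.hyps by (intro sum.union_disjoint) auto
  also have "(\<Sum>T\<in>insert a ` Pow A. card T) = (\<Sum>T\<in>Pow A. Suc (card T))"
    using card_insert by (simp add: sum.reindex[OF inj])
  finally have "(\<Sum>T\<in>Pow (insert a A). card T) = (\<Sum>T\<in>Pow A. card T) + (\<Sum>T\<in>Pow A. Suc (card T))" .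
  then show ?case using insert by (simp add: sum_Suc card_Pow algebra_simps)
qed simp

lemma card_Sigma_Pow_remove_Min:
  fixes A :: "'a :: linorder set"
  assumes A: "finite A"
  shows "card (SIGMA T:Pow A. T - {Min T}) + 2 ^ card A = (\<Sum>T\<in>Pow A. card T) + 1"
proof -
  have fin: "finite T" if "T \<in> Pow A" for T using that A finite_subset by auto
  have "card (SIGMA T:Pow A. T - {Min T}) + 2 ^ card A = (\<Sum>T\<in>Pow A. card (T - {Min T}) + 1)"
    using A fin by (simp add: card_SigmaI sum_Suc card_Pow)
  also have "\<dots> = 1 + (\<Sum>T\<in>Pow A - {{}}. card (T - {Min T}) + 1)"
    using A by (simp add: sum.remove[of _ "{}"])
  also have "(\<Sum>T\<in>Pow A - {{}}. card (T - {Min T}) + 1) = (\<Sum>T\<in>Pow A - {{}}. card T)"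
    using fin by (intro sum.cong) (auto simp: card_Diff_singleton card_gt_0_iff)
  also have "\<dots> = (\<Sum>T\<in>Pow A. card T)"
    using A by (simp add: sum.remove[of _ "{}"])
  finally show ?thesis by simp
qed

section \<open>Expansion groups\<close>

locale expansion = group G for G (structure) +
  fixes n :: nat and \<phi> :: "'a \<Rightarrow> nat set" and g :: "nat \<Rightarrow> 'a"
  assumes expansion_group: "expansion_group n G \<phi> g"
begin

definition K :: "'a set" where "K = {x \<in> carrier G. \<phi> x = {}}"

lemma kernel_eq_K: "kernel G (Vn n) \<phi> = K"
  by (simp add: kernel_def K_def Vn_def)

lemma phi_mult: "x \<in> carrier G \<Longrightarrow> y \<in> carrier G \<Longrightarrow> \<phi> (x \<otimes> y) = (\<phi> x - \<phi> y) \<union> (\<phi> y - \<phi> x)"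
  using hom_mult expansion_group by (fastforce simp: expansion_group_def Vn_def)

lemma phi_subset: "x \<in> carrier G \<Longrightarrow> \<phi> x \<subseteq> {1..n}"
  using hom_in_carrier expansion_group by (fastforce simp: expansion_group_def Vn_def)

lemma g_closed [simp]: "i \<in> {1..n} \<Longrightarrow> g i \<in> carrier G"
  and phi_g: "i \<in> {1..n} \<Longrightarrow> \<phi> (g i) = {i}"
  and g_square: "i \<in> {1..n} \<Longrightarrow> g i \<otimes> g i = \<one>"
  using expansion_group by (simp_all add: expansion_group_def)

lemma inv_g [simp]: "i \<in> {1..n} \<Longrightarrow> inv (g i) = g i"
  using g_square inv_equality g_closed by metis

lemma K_closed: "x \<in> K \<Longrightarrow> x \<in> carrier G"
  by (simp add: K_def)

lemma K_comm: "x \<in> K \<Longrightarrow> y \<in> K \<Longrightarrow> x \<otimes> y = y \<otimes> x"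
  and K_square: "x \<in> K \<Longrightarrow> x \<otimes> x = \<one>"
  and comm_subgroup_carrier: "comm_subgroup G (carrier G) (carrier G) = K"
  using expansion_group by (simp_all add: expansion_group_def kernel_eq_K)

lemma inv_K [simp]: "x \<in> K \<Longrightarrow> inv x = x"
  using K_square K_closed inv_equality by metis

lemma K_lcomm: "x \<in> K \<Longrightarrow> y \<in> K \<Longrightarrow> z \<in> K \<Longrightarrow> x \<otimes> (y \<otimes> z) = y \<otimes> (x \<otimes> z)"
  by (metis K_comm K_closed m_assoc)

lemma K_cancel_left [simp]: "x \<in> K \<Longrightarrow> y \<in> carrier G \<Longrightarrow> x \<otimes> (x \<otimes> y) = y"
  by (simp add: K_closed K_square flip: m_assoc)

lemma lcs_one: "lcs G 1 = K"
  by (simp add: comm_subgroup_carrier)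

lemma K_normal: "K \<lhd> G"
  using lcs_normal[of 1] by (simp only: lcs_one)

lemma K_subgroup: "subgroup K G"
  by (rule normal_imp_subgroup[OF K_normal])

lemma K_mult: "x \<in> K \<Longrightarrow> y \<in> K \<Longrightarrow> x \<otimes> y \<in> K"
  by (rule subgroup.m_closed[OF K_subgroup])

lemma commutator_in_K: "a \<in> carrier G \<Longrightarrow> b \<in> carrier G \<Longrightarrow> commutator G a b \<in> K"
  using comm_subgroup_carrier by (auto simp: comm_subgroup_eq intro: generate.incl)

lemma commutator_K_K: "x \<in> K \<Longrightarrow> y \<in> K \<Longrightarrow> commutator G x y = \<one>"
  by (simp add: commutator_def K_closed m_assoc K_lcomm[of y x y] K_square)

lemma phi_eq_iff: "a \<in> carrier G \<Longrightarrow> b \<in> carrier G \<Longrightarrow> inv a \<otimes> b \<in> K \<longleftrightarrow> \<phi> a = \<phi> b"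
proof -
  assume ab: "a \<in> carrier G" "b \<in> carrier G"
  have "\<phi> (inv a) = \<phi> a"
    using phi_mult[of a "inv a"] subgroup.one_closed[OF K_subgroup] ab by (auto simp: K_def)
  then show ?thesis using ab by (auto simp: K_def phi_mult)
qed

lemma generate_g_K_eq_carrier: "generate G (g ` {1..n} \<union> K) = carrier G"
proof
  show "generate G (g ` {1..n} \<union> K) \<subseteq> carrier G"
    by (rule generate_incl) (auto simp: K_def)
  have "a \<in> generate G (g ` {1..n} \<union> K)" if "a \<in> carrier G" "card (\<phi> a) = m" for a m
    using that
  proof (induction m arbitrary: a)
    case 0
    then have "\<phi> a = {}" using phi_subset finite_subset by (metis card_0_eq finite_atLeastAtMost)
    then show ?case using 0 by (auto simp: K_def intro: generate.incl)
  next
    case (Suc m)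
    then obtain i where i: "i \<in> \<phi> a" by (metis card.empty ex_in_conv nat.distinct(1))
    then have i_range: "i \<in> {1..n}" using phi_subset Suc.prems by blast
    have "\<phi> (g i \<otimes> a) = \<phi> a - {i}"
      using Suc.prems i i_range by (auto simp: phi_mult phi_g)
    then have "card (\<phi> (g i \<otimes> a)) = m"
      using Suc.prems i phi_subset finite_subset by (metis card_Diff_singleton diff_Suc_1 finite_atLeastAtMost)
    then have "g i \<otimes> a \<in> generate G (g ` {1..n} \<union> K)"
      using Suc.IH Suc.prems i_range by simp
    moreover have "g i \<in> generate G (g ` {1..n} \<union> K)" using i_range by (auto intro: generate.incl)
    moreover have "a = g i \<otimes> (g i \<otimes> a)" using i_range Suc.prems g_square by (simp flip: m_assoc)
    ultimately show ?case by (metis generate.eng)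
  qed
  then show "carrier G \<subseteq> generate G (g ` {1..n} \<union> K)" by blast
qed

definition \<sigma> :: "nat \<Rightarrow> 'a \<Rightarrow> 'a" where "\<sigma> i x = g i \<otimes> x \<otimes> g i"

lemma \<sigma>_K: "i \<in> {1..n} \<Longrightarrow> x \<in> K \<Longrightarrow> \<sigma> i x \<in> K"
  using normal.inv_op_closed2[OF K_normal, of "g i" x] by (simp add: \<sigma>_def)

lemma \<sigma>_mult: "i \<in> {1..n} \<Longrightarrow> x \<in> carrier G \<Longrightarrow> y \<in> carrier G \<Longrightarrow> \<sigma> i (x \<otimes> y) = \<sigma> i x \<otimes> \<sigma> i y"
  using g_square by (simp add: \<sigma>_def m_assoc flip: m_assoc[of "g i" "g i"])

lemma \<sigma>_\<sigma>: "i \<in> {1..n} \<Longrightarrow> x \<in> carrier G \<Longrightarrow> \<sigma> i (\<sigma> i x) = x"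
  using g_square by (simp add: \<sigma>_def m_assoc flip: m_assoc[of "g i" "g i"])

lemma \<sigma>_commute:
  assumes i: "i \<in> {1..n}" and j: "j \<in> {1..n}" and x: "x \<in> K"
  shows "\<sigma> i (\<sigma> j x) = \<sigma> j (\<sigma> i x)"
proof -
  define a b where "a = g i \<otimes> g j" and "b = g j \<otimes> g i"
  define k where "k = inv b \<otimes> a"
  have ab: "a \<in> carrier G" "b \<in> carrier G" using i j by (simp_all add: a_def b_def)
  have k: "k \<in> K"
    unfolding k_def a_def b_def using i j by (subst phi_eq_iff) (auto simp: phi_mult phi_g)
  have a_eq: "a = b \<otimes> k" using ab by (simp add: k_def)
  have "\<sigma> i (\<sigma> j x) = a \<otimes> x \<otimes> inv a"
    using i j x by (simp add: \<sigma>_def a_def m_assoc inv_mult_group K_closed)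
  also have "\<dots> = b \<otimes> (k \<otimes> x \<otimes> inv k) \<otimes> inv b"
    unfolding a_eq using ab k x by (simp add: m_assoc inv_mult_group K_closed)
  also have "k \<otimes> x \<otimes> inv k = x"
    using k x by (simp add: K_comm K_closed m_assoc)
  also have "b \<otimes> x \<otimes> inv b = \<sigma> j (\<sigma> i x)"
    using i j x by (simp add: \<sigma>_def b_def m_assoc inv_mult_group K_closed)
  finally show ?thesis .
qed

text \<open>
  On K, written additively, D i = \<sigma> i + 1 is the action of x_i, and D_word w is the action of
  the monomial of the word w.
\<close>

definition D :: "nat \<Rightarrow> 'a \<Rightarrow> 'a" where "D i x = commutator G (g i) x"

lemma D_K: "i \<in> {1..n} \<Longrightarrow> x \<in> carrier G \<Longrightarrow> D i x \<in> K"
  by (simp add: D_def commutator_in_K)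

lemma D_eq: "i \<in> {1..n} \<Longrightarrow> x \<in> K \<Longrightarrow> D i x = \<sigma> i x \<otimes> x"
  by (simp add: D_def commutator_def \<sigma>_def K_closed)

lemma \<sigma>_eq: "i \<in> {1..n} \<Longrightarrow> x \<in> K \<Longrightarrow> \<sigma> i x = D i x \<otimes> x"
  using \<sigma>_K by (simp add: D_eq K_closed m_assoc K_square)

lemma commutator_K_g: "i \<in> {1..n} \<Longrightarrow> x \<in> K \<Longrightarrow> commutator G x (g i) = D i x"
  using inv_commutator[of "g i" x] D_K[of i x] by (simp add: D_def K_closed)

lemma D_one: "i \<in> {1..n} \<Longrightarrow> D i \<one> = \<one>"
  by (simp add: D_def commutator_def g_square)

lemma D_mult: "i \<in> {1..n} \<Longrightarrow> x \<in> K \<Longrightarrow> y \<in> K \<Longrightarrow> D i (x \<otimes> y) = D i x \<otimes> D i y"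
  using subgroup.m_closed[OF K_subgroup, of x y] \<sigma>_K[of i x] \<sigma>_K[of i y]
  by (simp add: D_eq \<sigma>_mult K_closed m_assoc K_lcomm[of "\<sigma> i y" x])

lemma D_D:
  assumes i: "i \<in> {1..n}" and x: "x \<in> K"
  shows "D i (D i x) = \<one>"
proof -
  have "D i (D i x) = \<sigma> i (D i x) \<otimes> D i x" using D_eq[OF i] D_K[OF i K_closed[OF x]] by blast
  also have "\<dots> = x \<otimes> (\<sigma> i x \<otimes> (\<sigma> i x \<otimes> x))"
    using i x \<sigma>_K[OF i x] by (simp add: D_eq \<sigma>_mult \<sigma>_\<sigma> K_closed m_assoc)
  also have "\<dots> = \<one>" using i x \<sigma>_K[OF i x] by (simp add: K_closed K_square)
  finally show ?thesis .
qed

lemma D_commute: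
  assumes i: "i \<in> {1..n}" and j: "j \<in> {1..n}" and x: "x \<in> K"
  shows "D i (D j x) = D j (D i x)"
proof -
  have K: "\<sigma> i x \<in> K" "\<sigma> j x \<in> K" "\<sigma> i (\<sigma> j x) \<in> K" "\<sigma> j (\<sigma> i x) \<in> K"
    using i j x by (simp_all add: \<sigma>_K)
  have "D i (D j x) = \<sigma> i (D j x) \<otimes> D j x" using D_eq[OF i] D_K[OF j K_closed[OF x]] by blast
  also have "\<dots> = \<sigma> i (\<sigma> j x) \<otimes> (\<sigma> i x \<otimes> (\<sigma> j x \<otimes> x))"
    using i j x K by (simp add: D_eq \<sigma>_mult K_closed m_assoc)
  also have "\<dots> = \<sigma> j (\<sigma> i x) \<otimes> (\<sigma> j x \<otimes> (\<sigma> i x \<otimes> x))"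
    using i j x K by (simp add: \<sigma>_commute K_lcomm[of "\<sigma> i x" "\<sigma> j x" x])
  also have "\<dots> = \<sigma> j (D i x) \<otimes> D i x"
    using i j x K by (simp add: D_eq \<sigma>_mult K_closed m_assoc)
  also have "\<dots> = D j (D i x)" using D_eq[OF j] D_K[OF i K_closed[OF x]] by simp
  finally show ?thesis .
qed

definition D_word :: "nat list \<Rightarrow> 'a \<Rightarrow> 'a" where "D_word w = foldr D w"

lemma D_word_Nil [simp]: "D_word [] x = x"
  and D_word_Cons [simp]: "D_word (i # w) x = D i (D_word w x)"
  and D_word_append: "D_word (u @ v) x = D_word u (D_word v x)"
  by (simp_all add: D_word_def)

lemma D_word_K: "w \<in> lists {1..n} \<Longrightarrow> x \<in> K \<Longrightarrow> D_word w x \<in> K"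
  by (induction w) (auto simp: D_K K_closed)

lemma D_word_one: "w \<in> lists {1..n} \<Longrightarrow> D_word w \<one> = \<one>"
  by (induction w) (auto simp: D_one)

lemma D_word_mult:
  "w \<in> lists {1..n} \<Longrightarrow> x \<in> K \<Longrightarrow> y \<in> K \<Longrightarrow> D_word w (x \<otimes> y) = D_word w x \<otimes> D_word w y"
  by (induction w) (auto simp: D_mult D_word_K)

lemma D_word_remove1:
  "w \<in> lists {1..n} \<Longrightarrow> a \<in> set w \<Longrightarrow> x \<in> K \<Longrightarrow> D_word w x = D a (D_word (remove1 a w) x)"
proof (induction w)
  case (Cons b w)
  show ?case
  proof (cases "a = b")
    case False
    then have "D_word w x = D a (D_word (remove1 a w) x)" using Cons by simp
    moreover have "remove1 a w \<in> lists {1..n}" using Cons.prems(1) set_remove1_subset[of a w] by auto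
    moreover have "a \<in> {1..n}" "b \<in> {1..n}" using Cons.prems by auto
    ultimately show ?thesis
      using Cons.prems False D_commute[of b a "D_word (remove1 a w) x"] D_word_K by simp
  qed simp
qed simp

lemma D_word_mset:
  "w \<in> lists {1..n} \<Longrightarrow> mset w = mset w' \<Longrightarrow> x \<in> K \<Longrightarrow> D_word w x = D_word w' x"
proof (induction w arbitrary: w')
  case (Cons a w)
  have a: "a \<in> set w'" using Cons.prems(2) by (metis list.set_intros(1) set_mset_mset)
  have w': "w' \<in> lists {1..n}" using Cons.prems(1,2) by (metis in_listsI in_listsD set_mset_mset)
  have "mset w = mset (remove1 a w')" using Cons.prems(2) by (simp add: mset_remove1 flip: Cons.prems(2))
  then have "D_word w x = D_word (remove1 a w') x" using Cons.IH Cons.prems(1,3) by simp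
  then show ?case using D_word_remove1[OF w' a Cons.prems(3)] by simp
qed simp

lemma D_word_pull:
  "w \<in> lists {1..n} \<Longrightarrow> a \<in> set w \<Longrightarrow> x \<in> K \<Longrightarrow> D_word w x = D_word (remove1 a w) (D a x)"
  using D_word_mset[of w "remove1 a w @ [a]"] by (simp add: D_word_append)

lemma D_word_not_distinct: "w \<in> lists {1..n} \<Longrightarrow> \<not> distinct w \<Longrightarrow> x \<in> K \<Longrightarrow> D_word w x = \<one>"
proof -
  assume w: "w \<in> lists {1..n}" and "\<not> distinct w" and x: "x \<in> K"
  then obtain u y v z where decomp: "w = u @ [y] @ v @ [y] @ z" using not_distinct_decomp by blast
  have "D_word w x = D_word (y # y # u @ v @ z) x"
    using w _ x by (rule D_word_mset) (simp add: decomp)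
  then show ?thesis using w x decomp by (simp add: D_D D_word_K)
qed

lemma D_word_long: "w \<in> lists {1..n} \<Longrightarrow> n < length w \<Longrightarrow> x \<in> K \<Longrightarrow> D_word w x = \<one>"
  using card_mono[of "{1..n}" "set w"] distinct_card[of w]
  by (force intro: D_word_not_distinct)

lemma D_word_generate:
  assumes w: "w \<in> lists {1..n}" and S: "S \<subseteq> K" and x: "x \<in> generate G S"
  shows "D_word w x \<in> generate G (D_word w ` S)"
  using x
proof (induction rule: generate.induct)
  case one thus ?case using w by (simp add: D_word_one generate.one)
next
  case (incl h) thus ?case by (simp add: generate.incl)
next
  case (inv h)
  then have "inv h = h" using S by auto
  then show ?case using inv.hyps by (simp add: generate.incl)
next
  case (eng h1 h2)
  have "h1 \<in> K" "h2 \<in> K" using eng.hyps generate_subgroup_incl[OF S K_subgroup] by auto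
  then show ?case using eng.IH w by (simp add: D_word_mult generate.eng)
qed

lemma normal_if_D_closed:
  assumes N: "subgroup N G" "N \<subseteq> K" and D_closed: "\<And>i x. i \<in> {1..n} \<Longrightarrow> x \<in> N \<Longrightarrow> D i x \<in> N"
  shows "N \<lhd> G"
proof (rule normal_if_generators_normalize[OF N(1) _ generate_g_K_eq_carrier])
  show "g ` {1..n} \<union> K \<subseteq> carrier G" by (auto simp: K_closed)
  show conj: "s \<otimes> h \<otimes> inv s \<in> N" if s: "s \<in> g ` {1..n} \<union> K" and hN: "h \<in> N" for s h
  proof -
    have h: "h \<in> K" using hN N(2) by blast
    show ?thesis
    proof (cases "s \<in> K")
      case True then show ?thesis using h hN by (simp add: K_comm K_closed m_assoc K_square)
    next
      case False
      then obtain i where "i \<in> {1..n}" "s = g i" using s by blast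
      then show ?thesis
        using h hN D_closed[of i h] subgroup.m_closed[OF N(1)] by (simp flip: \<sigma>_def add: \<sigma>_eq)
    qed
  qed
  show "inv s \<otimes> h \<otimes> s \<in> N" if "s \<in> g ` {1..n} \<union> K" "h \<in> N" for s h
    using conj[of "inv s" h] that by auto
qed

section \<open>Nilpotency\<close>

definition K_filtration :: "nat \<Rightarrow> 'a set" where
  "K_filtration j = {x \<in> K. \<forall>w \<in> lists {1..n}. n < length w + j \<longrightarrow> D_word w x = \<one>}"

lemma K_filtration_subgroup: "subgroup (K_filtration j) G"
proof (rule subgroupI)
  show "K_filtration j \<subseteq> carrier G" by (auto simp: K_filtration_def K_closed)
  show "K_filtration j \<noteq> {}"
    using subgroup.one_closed[OF K_subgroup] D_word_one by (auto simp: K_filtration_def)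
  show "inv x \<in> K_filtration j" if "x \<in> K_filtration j" for x using that by (auto simp: K_filtration_def)
  show "x \<otimes> y \<in> K_filtration j" if "x \<in> K_filtration j" "y \<in> K_filtration j" for x y
    using that subgroup.m_closed[OF K_subgroup] by (auto simp: K_filtration_def D_word_mult)
qed

lemma K_filtration_0: "K_filtration 0 = K"
  using D_word_long by (auto simp: K_filtration_def)

lemma K_filtration_trivial: "K_filtration (Suc n) \<subseteq> {\<one>}"
  by (auto simp: K_filtration_def dest: bspec[of _ _ "[]"])

lemma D_K_filtration:
  assumes i: "i \<in> {1..n}" and x: "x \<in> K_filtration j"
  shows "D i x \<in> K_filtration (Suc j)"
proof -
  have "D_word w (D i x) = \<one>" if "w \<in> lists {1..n}" "n < length w + Suc j" for w
  proof -
    have "w @ [i] \<in> lists {1..n}" "n < length (w @ [i]) + j" using that i by auto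
    then have "D_word (w @ [i]) x = \<one>" using x by (simp add: K_filtration_def)
    then show ?thesis by (simp add: D_word_append)
  qed
  then show ?thesis using i x D_K[OF i K_closed] by (simp add: K_filtration_def)
qed

lemma K_filtration_normal: "K_filtration j \<lhd> G"
proof (rule normal_if_D_closed[OF K_filtration_subgroup])
  show "K_filtration j \<subseteq> K" by (auto simp: K_filtration_def)
  show "D i x \<in> K_filtration j" if "i \<in> {1..n}" "x \<in> K_filtration j" for i x
    using D_K_filtration[OF that] by (auto simp: K_filtration_def)
qed

lemma lcs_subset_K_filtration: "lcs G (Suc m) \<subseteq> K_filtration m"
proof (induction m)
  case 0 show ?case by (simp add: K_filtration_0 comm_subgroup_carrier)
next
  case (Suc m)
  have "comm_subgroup G (carrier G) (lcs G (Suc m)) \<subseteq> K_filtration (Suc m)"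
  proof (rule comm_subgroup_subset_normal[OF K_filtration_normal _ generate_g_K_eq_carrier])
    show "g ` {1..n} \<union> K \<subseteq> carrier G" using K_closed by auto
    show "lcs G (Suc m) \<subseteq> carrier G" by (rule subgroup.subset[OF normal_imp_subgroup[OF lcs_normal]])
    fix s h assume s: "s \<in> g ` {1..n} \<union> K" and h: "h \<in> lcs G (Suc m)"
    then have "h \<in> K_filtration m" "h \<in> K" using Suc.IH by (auto simp: K_filtration_def)
    then show "commutator G s h \<in> K_filtration (Suc m)"
      using s D_K_filtration subgroup.one_closed[OF K_filtration_subgroup]
      by (auto simp: commutator_K_K simp flip: D_def)
  qed
  then show ?case by simp
qed

lemma lcs_Suc_Suc_n_trivial: "lcs G (Suc (Suc n)) = {\<one>}"
  using lcs_subset_K_filtration[of "Suc n"] K_filtration_trivial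
    subgroup.one_closed[OF normal_imp_subgroup[OF lcs_normal]] by blast

section \<open>A spanning set of the kernel\<close>

definition c :: "nat \<Rightarrow> nat \<Rightarrow> 'a" where "c i j = commutator G (g i) (g j)"

lemma c_K: "i \<in> {1..n} \<Longrightarrow> j \<in> {1..n} \<Longrightarrow> c i j \<in> K"
  by (simp add: c_def commutator_in_K)

lemma c_sym: "i \<in> {1..n} \<Longrightarrow> j \<in> {1..n} \<Longrightarrow> c j i = c i j"
  using inv_commutator[of "g i" "g j"] inv_K[OF c_K] by (simp add: c_def)

lemma c_self: "i \<in> {1..n} \<Longrightarrow> c i i = \<one>"
  using g_square by (simp add: c_def commutator_def)

lemma \<sigma>_c: "i \<in> {1..n} \<Longrightarrow> j \<in> {1..n} \<Longrightarrow> \<sigma> i (c i j) = c i j"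
proof -
  assume ij: "i \<in> {1..n}" "j \<in> {1..n}"
  then have "\<sigma> i (c i j) = c j i"
    using g_square[of i] by (simp add: \<sigma>_def c_def commutator_def m_assoc flip: m_assoc[of "g i" "g i"])
  then show ?thesis using c_sym ij by simp
qed

lemma D_c_left: "i \<in> {1..n} \<Longrightarrow> j \<in> {1..n} \<Longrightarrow> D i (c i j) = \<one>"
  by (simp add: D_eq c_K \<sigma>_c K_square)

lemma D_c_right: "i \<in> {1..n} \<Longrightarrow> j \<in> {1..n} \<Longrightarrow> D j (c i j) = \<one>"
  using D_c_left c_sym by metis

lemma square_g_mult: "i \<in> {1..n} \<Longrightarrow> y \<in> carrier G \<Longrightarrow>
  (g i \<otimes> y) \<otimes> (g i \<otimes> y) = commutator G (g i) y \<otimes> (y \<otimes> y)"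
  by (simp add: commutator_def m_assoc)

lemma square_g_g_g:
  assumes i: "i \<in> {1..n}" and j: "j \<in> {1..n}" and k: "k \<in> {1..n}"
  shows "(g i \<otimes> (g j \<otimes> g k)) \<otimes> (g i \<otimes> (g j \<otimes> g k)) = c i j \<otimes> \<sigma> j (c i k) \<otimes> c j k"
proof -
  have "(g j \<otimes> g k) \<otimes> (g j \<otimes> g k) = c j k"
    using square_g_mult[OF j, of "g k"] j k g_square by (simp add: c_def)
  then show ?thesis
    using i j k by (simp add: square_g_mult commutator_mult_right c_def \<sigma>_def)
qed

text \<open>The Jacobi identity, obtained by computing the square of g i g j g k in two ways.\<close>
lemma jacobi:
  assumes i: "i \<in> {1..n}" and j: "j \<in> {1..n}" and k: "k \<in> {1..n}"
  shows "D k (c i j) = D j (c i k) \<otimes> D i (c j k)"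
proof -
  have cK: "c i j \<in> K" "c i k \<in> K" "c j k \<in> K" using i j k by (simp_all add: c_K)
  have D_cK: "D j (c i k) \<in> K" "D i (c j k) \<in> K" "D k (c i j) \<in> K"
    using i j k cK by (simp_all add: D_K K_closed)
  define L where "L = c i j \<otimes> (D j (c i k) \<otimes> c i k) \<otimes> c j k"
  define R where "R = (D i (c j k) \<otimes> c j k) \<otimes> (D k (c i j) \<otimes> c i j) \<otimes> c i k"
  have "L = (g i \<otimes> (g j \<otimes> g k)) \<otimes> (g i \<otimes> (g j \<otimes> g k))"
    using square_g_g_g[OF i j k] j cK by (simp add: L_def \<sigma>_eq)
  also have "g i \<otimes> (g j \<otimes> g k) = \<sigma> i (g j \<otimes> (g k \<otimes> g i))"
    using i j k g_square[OF i] by (simp add: \<sigma>_def m_assoc)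
  also have "\<sigma> i (g j \<otimes> (g k \<otimes> g i)) \<otimes> \<sigma> i (g j \<otimes> (g k \<otimes> g i))
      = \<sigma> i (c j k \<otimes> \<sigma> k (c j i) \<otimes> c k i)"
    using i j k by (simp add: square_g_g_g \<sigma>_mult flip: \<sigma>_mult)
  also have "\<dots> = \<sigma> i (c j k) \<otimes> \<sigma> k (\<sigma> i (c i j)) \<otimes> \<sigma> i (c i k)"
    using i j k cK \<sigma>_K[OF k cK(1)]
    by (simp add: c_sym[of i j] c_sym[of i k] \<sigma>_mult K_closed \<sigma>_commute[of i k])
  also have "\<dots> = \<sigma> i (c j k) \<otimes> \<sigma> k (c i j) \<otimes> c i k"
    using i j k by (simp add: \<sigma>_c)
  also have "\<dots> = R"
    using i j k cK by (simp add: R_def \<sigma>_eq)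
  finally have "L = R" .
  have LR: "L \<in> K" "R \<in> K" using cK D_cK by (simp_all add: L_def R_def K_mult)
  have "D k (c i j) = D k (c i j) \<otimes> (R \<otimes> R)" using LR D_cK by (simp add: K_square K_closed)
  also have "\<dots> = D k (c i j) \<otimes> (L \<otimes> R)" using \<open>L = R\<close> by simp
  also have "\<dots> = D j (c i k) \<otimes> D i (c j k)"
    unfolding L_def R_def using cK D_cK by (simp add: m_assoc K_comm K_lcomm K_square K_mult K_closed)
  finally show ?thesis .
qed

text \<open>
  c_gens generates the submodule spanned by the c i j, and aug_gens m generates I^m K, where
  I = (x_1, ..., x_n) is the augmentation ideal. Since K = \<langle>c_gens\<rangle> + I K and
  I^(n+1) = 0, a Nakayama argument shows that c_gens alone generates K.
\<close>

definition c_gens :: "'a set" where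
  "c_gens = {D_word w (c i j) | w i j. w \<in> lists {1..n} \<and> i \<in> {1..n} \<and> j \<in> {1..n}}"

definition aug_gens :: "nat \<Rightarrow> 'a set" where
  "aug_gens m = {D_word w x | w x. w \<in> lists {1..n} \<and> m \<le> length w \<and> x \<in> K}"

lemma c_gens_K: "c_gens \<subseteq> K"
  unfolding c_gens_def using D_word_K c_K by blast

lemma aug_gens_K: "aug_gens m \<subseteq> K"
  unfolding aug_gens_def using D_word_K by blast

lemma D_word_c_gens: "w \<in> lists {1..n} \<Longrightarrow> D_word w ` c_gens \<subseteq> c_gens"
  unfolding c_gens_def by (force simp flip: D_word_append)

lemma D_word_aug_gens: "w \<in> lists {1..n} \<Longrightarrow> D_word w ` aug_gens m \<subseteq> aug_gens (length w + m)"
  unfolding aug_gens_def by (force simp flip: D_word_append)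

lemma aug_gens_antimono: "m \<le> m' \<Longrightarrow> aug_gens m' \<subseteq> aug_gens m"
  unfolding aug_gens_def using le_trans by blast

lemma c_in_c_gens: "i \<in> {1..n} \<Longrightarrow> j \<in> {1..n} \<Longrightarrow> c i j \<in> c_gens"
  unfolding c_gens_def by (intro CollectI exI[of _ "[]"] exI[of _ i] exI[of _ j]) simp

lemma D_in_aug_gens: "i \<in> {1..n} \<Longrightarrow> x \<in> K \<Longrightarrow> D i x \<in> aug_gens 1"
  unfolding aug_gens_def by (intro CollectI exI[of _ "[i]"] exI[of _ x]) simp

lemma generate_c_gens_aug_gens_normal: "generate G (c_gens \<union> aug_gens 1) \<lhd> G"
proof (rule normal_if_D_closed)
  let ?N = "generate G (c_gens \<union> aug_gens 1)"
  have gens: "c_gens \<union> aug_gens 1 \<subseteq> K" using c_gens_K aug_gens_K by blast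
  show "subgroup ?N G" using gens K_closed by (intro generate_is_subgroup) auto
  show "?N \<subseteq> K" by (rule generate_subgroup_incl[OF gens K_subgroup])
  fix i x assume i: "i \<in> {1..n}" and x: "x \<in> ?N"
  have "D_word [i] ` (c_gens \<union> aug_gens 1) \<subseteq> c_gens \<union> aug_gens 1"
    using i D_word_c_gens[of "[i]"] D_word_aug_gens[of "[i]" 1] aug_gens_antimono[of 1 "length [i] + 1"]
    by auto
  moreover have "D_word [i] x \<in> generate G (D_word [i] ` (c_gens \<union> aug_gens 1))"
    using i by (intro D_word_generate[OF _ gens x]) simp
  ultimately have "D_word [i] x \<in> ?N" using mono_generate by blast
  then show "D i x \<in> ?N" by simp
qed

lemma K_subset_generate_c_gens_aug_gens: "K \<subseteq> generate G (c_gens \<union> aug_gens 1)"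
proof -
  let ?N = "generate G (c_gens \<union> aug_gens 1)"
  have "comm_subgroup G (carrier G) (carrier G) \<subseteq> ?N"
  proof (rule comm_subgroup_carrier_subset_normal[OF generate_c_gens_aug_gens_normal _
        generate_g_K_eq_carrier])
    show "g ` {1..n} \<union> K \<subseteq> carrier G" using K_closed by auto
    fix s t assume "s \<in> g ` {1..n} \<union> K" "t \<in> g ` {1..n} \<union> K"
    then consider (gg) i j where "i \<in> {1..n}" "j \<in> {1..n}" "s = g i" "t = g j"
      | (gK) i where "i \<in> {1..n}" "s = g i" "t \<in> K"
      | (Kg) j where "j \<in> {1..n}" "s \<in> K" "t = g j"
      | (KK) "s \<in> K" "t \<in> K"
      by blast
    then show "commutator G s t \<in> ?N"
    proof cases
      case gg then show ?thesis using c_in_c_gens[of i j] by (auto simp: c_def intro: generate.incl)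
    next
      case gK then show ?thesis using D_in_aug_gens[of i t] by (auto simp: D_def intro: generate.incl)
    next
      case Kg then show ?thesis using D_in_aug_gens[of j s] by (auto simp: commutator_K_g intro: generate.incl)
    next
      case KK then show ?thesis by (simp add: commutator_K_K generate.one)
    qed
  qed
  then show ?thesis by (simp add: comm_subgroup_carrier)
qed

lemma aug_gens_subset_generate: "aug_gens m \<subseteq> generate G (c_gens \<union> aug_gens (Suc m))"
proof
  fix y assume "y \<in> aug_gens m"
  then obtain w x where w: "w \<in> lists {1..n}" "m \<le> length w" and x: "x \<in> K" and y: "y = D_word w x"
    by (auto simp: aug_gens_def)
  have "D_word w ` (c_gens \<union> aug_gens 1) \<subseteq> c_gens \<union> aug_gens (Suc m)"
    using D_word_c_gens[OF w(1)] D_word_aug_gens[OF w(1), of 1] aug_gens_antimono[of "Suc m" "length w + 1"] w(2)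
    by auto
  then show "y \<in> generate G (c_gens \<union> aug_gens (Suc m))"
    using D_word_generate[OF w(1) _ K_subset_generate_c_gens_aug_gens[THEN subsetD, OF x]] c_gens_K aug_gens_K
      mono_generate y by blast
qed

lemma K_subset_generate_c_gens: "K \<subseteq> generate G c_gens"
proof -
  have gens_closed: "c_gens \<union> aug_gens m \<subseteq> carrier G" for m using c_gens_K aug_gens_K K_closed by blast
  have "K \<subseteq> generate G (c_gens \<union> aug_gens m)" for m
  proof (induction m)
    case 0
    have "x \<in> aug_gens 0" if "x \<in> K" for x
      unfolding aug_gens_def using that D_word_Nil[of x, symmetric] lists.Nil by blast
    then have "K \<subseteq> aug_gens 0" by blast
    then show ?case by (auto intro: generate.incl)
  next
    case (Suc m)
    have "c_gens \<union> aug_gens m \<subseteq> generate G (c_gens \<union> aug_gens (Suc m))"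
      using aug_gens_subset_generate by (auto intro: generate.incl)
    then have "generate G (c_gens \<union> aug_gens m) \<subseteq> generate G (c_gens \<union> aug_gens (Suc m))"
      using gens_closed by (intro generate_subgroup_incl generate_is_subgroup)
    then show ?case using Suc.IH by blast
  qed
  moreover have "aug_gens (Suc n) \<subseteq> {\<one>}" by (auto simp: aug_gens_def intro!: D_word_long)
  then have "generate G (c_gens \<union> aug_gens (Suc n)) \<subseteq> generate G c_gens"
    using c_gens_K K_closed
    by (intro generate_subgroup_incl generate_is_subgroup) (auto intro: generate.incl generate.one)
  ultimately show ?thesis by blast
qed

text \<open>
  The Jacobi identity lets one always move the least index of a monomial into the commutator,
  so these elements already generate K.
\<close>

definition basis_index :: "(nat set \<times> nat) set" where "basis_index = (SIGMA T:Pow {1..n}. T - {Min T})"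

definition basis :: "nat set \<times> nat \<Rightarrow> 'a" where
  "basis = (\<lambda>(T, j). D_word (sorted_list_of_set (T - {Min T, j})) (c (Min T) j))"

lemma D_word_c_in_basis:
  assumes w: "w \<in> lists {1..n}" and i: "i \<in> {1..n}" and j: "j \<in> {1..n}"
    and dist: "distinct (i # j # w)" and min: "\<forall>x \<in> set (j # w). i < x"
  shows "D_word w (c i j) \<in> basis ` basis_index"
proof -
  define T where "T = insert i (insert j (set w))"
  have Min: "Min T = i" unfolding T_def using min by (intro Min_eqI) auto
  have "(T, j) \<in> basis_index" using Min i j w min by (auto simp: basis_index_def T_def)
  moreover have "T - {Min T, j} = set w" using Min dist by (auto simp: T_def)
  moreover have "D_word (sorted_list_of_set (set w)) (c i j) = D_word w (c i j)"
    using w dist i j by (intro D_word_mset) (auto simp: sorted_list_of_set_sort_remdups distinct_remdups_id c_K)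
  ultimately have "basis (T, j) = D_word w (c i j)" using Min by (simp add: basis_def)
  then show ?thesis using \<open>(T, j) \<in> basis_index\<close> by (metis rev_image_eqI)
qed

lemma D_word_c_trivial:
  assumes w: "w \<in> lists {1..n}" and i: "i \<in> {1..n}" and j: "j \<in> {1..n}"
    and "\<not> distinct (i # j # w)"
  shows "D_word w (c i j) = \<one>"
proof -
  have w': "remove1 a w \<in> lists {1..n}" for a using w set_remove1_subset[of a w] by auto
  consider "\<not> distinct w" | "i = j" | "i \<in> set w" | "j \<in> set w" using assms(4) by auto
  then show ?thesis
  proof cases
    case 1 then show ?thesis using w i j by (simp add: D_word_not_distinct c_K)
  next
    case 2 then show ?thesis using w i by (simp add: c_self D_word_one)
  next
    case 3 then show ?thesis using w w' i j by (simp add: D_word_pull[of w i] c_K D_c_left D_word_one)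
  next
    case 4 then show ?thesis using w w' i j by (simp add: D_word_pull[of w j] c_K D_c_right D_word_one)
  qed
qed

lemma D_word_c_jacobi:
  assumes w: "w \<in> lists {1..n}" and i: "i \<in> {1..n}" and j: "j \<in> {1..n}" and m: "m \<in> set w"
  shows "D_word w (c i j) = D_word (remove1 m w @ [j]) (c m i) \<otimes> D_word (remove1 m w @ [i]) (c m j)"
proof -
  have m_range: "m \<in> {1..n}" using m w by auto
  have u: "remove1 m w \<in> lists {1..n}" using w set_remove1_subset[of m w] by auto
  have "D_word w (c i j) = D_word (remove1 m w) (D j (c i m) \<otimes> D i (c j m))"
    using D_word_pull[OF w m c_K[OF i j]] jacobi[OF i j m_range] by simp
  also have "\<dots> = D_word (remove1 m w @ [j]) (c m i) \<otimes> D_word (remove1 m w @ [i]) (c m j)"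
    using u i j m_range by (simp add: D_word_mult D_word_append D_K K_closed c_K c_sym)
  finally show ?thesis .
qed

lemma D_word_c_in_generate_basis:
  assumes w: "w \<in> lists {1..n}" and i: "i \<in> {1..n}" and j: "j \<in> {1..n}"
  shows "D_word w (c i j) \<in> generate G (basis ` basis_index)"
proof (cases "distinct (i # j # w)")
  case False
  then show ?thesis using D_word_c_trivial[OF assms] generate.one by simp
next
  case dist: True
  define m where "m = Min (set (i # j # w))"
  have m_le: "m \<le> x" if "x \<in> set (i # j # w)" for x
    unfolding m_def using that by (intro Min_le) auto
  have less_m: "\<forall>x \<in> set (i # j # w) - {m}. m < x" using m_le by force
  have "m \<in> set (i # j # w)" unfolding m_def by (rule Min_in) auto
  then consider "m = i" | "m = j" | "m \<in> set w" "m \<noteq> i" "m \<noteq> j" by auto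
  then show ?thesis
  proof cases
    case 1
    then have "\<forall>x\<in>set (j # w). i < x" using less_m dist by auto
    then show ?thesis using dist by (auto intro!: generate.incl D_word_c_in_basis w i j)
  next
    case 2
    then have "\<forall>x\<in>set (i # w). j < x" using less_m dist by auto
    then have "D_word w (c j i) \<in> basis ` basis_index" using dist by (intro D_word_c_in_basis w i j) auto
    then show ?thesis using c_sym[OF i j] by (auto intro: generate.incl)
  next
    case 3
    define u where "u = remove1 m w"
    have m: "m \<in> {1..n}" using 3 w by auto
    have u: "u \<in> lists {1..n}" "set u = set w - {m}" "distinct u"
      using w dist set_remove1_subset[of m w] by (auto simp: u_def)
    have "distinct (m # i # u @ [j])" "distinct (m # j # u @ [i])" using dist 3 u by auto
    moreover have "\<forall>x \<in> set (i # u @ [j]). m < x" "\<forall>x \<in> set (j # u @ [i]). m < x"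
      using less_m u(2) 3 by auto
    ultimately have "D_word (u @ [j]) (c m i) \<in> basis ` basis_index"
      "D_word (u @ [i]) (c m j) \<in> basis ` basis_index"
      using u(1) i j by (auto intro!: D_word_c_in_basis m)
    then show ?thesis
      unfolding D_word_c_jacobi[OF w i j 3(1)] u_def[symmetric] by (auto intro: generate.incl generate.eng)
  qed
qed

lemma basis_K: "basis ` basis_index \<subseteq> K"
proof -
  have "basis p \<in> K" if idx: "p \<in> basis_index" for p
  proof -
    obtain T j where p: "p = (T, j)" "T \<subseteq> {1..n}" "j \<in> T"
      using idx unfolding basis_index_def by blast
    then have "finite T" "T \<noteq> {}" using finite_subset by auto
    then have Min: "Min T \<in> {1..n}" using Min_in p(2) by blast
    have "T - {Min T, j} \<subseteq> {1..n}" using p(2) by blast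
    then have "set (sorted_list_of_set (T - {Min T, j})) \<subseteq> {1..n}"
      using \<open>finite T\<close> by simp
    then have "sorted_list_of_set (T - {Min T, j}) \<in> lists {1..n}" by blast
    moreover have "c (Min T) j \<in> K" using Min p(2,3) by (blast intro: c_K)
    ultimately show ?thesis unfolding p(1) basis_def by (simp add: D_word_K)
  qed
  then show ?thesis by blast
qed

lemma K_subset_generate_basis: "K \<subseteq> generate G (basis ` basis_index)"
proof -
  have "c_gens \<subseteq> generate G (basis ` basis_index)"
    using D_word_c_in_generate_basis by (auto simp: c_gens_def)
  then have "generate G c_gens \<subseteq> generate G (basis ` basis_index)"
    using basis_K K_closed by (intro generate_subgroup_incl generate_is_subgroup) auto
  then show ?thesis using K_subset_generate_c_gens by blast
qed

lemma card_basis_index: "n + card basis_index = n * 2 ^ (n - 1) + n + 1 - 2 ^ n"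
proof -
  define S where "S = (\<Sum>T\<in>Pow {1..n}. card T)"
  have "card basis_index + 2 ^ n = S + 1"
    using card_Sigma_Pow_remove_Min[of "{1..n}"] by (simp add: basis_index_def S_def)
  moreover have "S = n * 2 ^ (n - 1)"
    using sum_card_Pow[of "{1..n}"] by (cases n) (simp_all add: S_def)
  ultimately show ?thesis by linarith
qed

lemma card_K_le: "finite K \<and> card K \<le> 2 ^ card basis_index"
proof -
  let ?B = "basis ` basis_index"
  have fin: "finite basis_index"
    unfolding basis_index_def by (rule finite_SigmaI) (auto intro: finite_subset)
  have gen: "finite (generate G ?B)" "card (generate G ?B) \<le> 2 ^ card ?B"
    using card_generate_elementary_abelian[OF K_subgroup K_comm K_square _ basis_K] fin by auto
  have "card K \<le> card (generate G ?B)" using gen(1) K_subset_generate_basis by (rule card_mono)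
  also have "\<dots> \<le> 2 ^ card ?B" by (rule gen(2))
  also have "\<dots> \<le> 2 ^ card basis_index" using card_image_le[OF fin] by (intro power_increasing) auto
  finally show ?thesis using gen(1) K_subset_generate_basis finite_subset by blast
qed

lemma card_carrier_le: "finite (carrier G) \<and> card (carrier G) \<le> 2 ^ (n + card basis_index)"
proof -
  define rep where "rep S = (SOME a. a \<in> carrier G \<and> \<phi> a = S)" for S
  have rep: "rep (\<phi> a) \<in> carrier G \<and> \<phi> (rep (\<phi> a)) = \<phi> a" if "a \<in> carrier G" for a
    unfolding rep_def by (rule someI[of _ a]) (simp add: that)
  define f where "f a = (\<phi> a, inv (rep (\<phi> a)) \<otimes> a)" for a
  have "inj_on f (carrier G)"
  proof (rule inj_onI)
    fix a b assume "a \<in> carrier G" "b \<in> carrier G" "f a = f b"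
    then show "a = b" using rep by (simp add: f_def) (metis inv_closed l_cancel)
  qed
  moreover have "f ` carrier G \<subseteq> Pow {1..n} \<times> K"
    using rep phi_subset by (auto simp: f_def phi_eq_iff)
  moreover have fin: "finite (Pow {1..n} \<times> K)" using card_K_le by simp
  ultimately have "finite (carrier G) \<and> card (carrier G) \<le> card (Pow {1..n} \<times> K)"
    by (metis card_inj_on_le finite_imageD finite_subset)
  moreover have "card (Pow {1..n} \<times> K) \<le> 2 ^ (n + card basis_index)"
    using card_K_le by (simp add: card_cartesian_product card_Pow power_add)
  ultimately show ?thesis by linarith
qed

lemma generate_g_eq_carrier: "generate G (g ` {1..n}) = carrier G"
proof
  let ?H = "generate G (g ` {1..n})"
  show "?H \<subseteq> carrier G" by (rule generate_incl) auto
  have H: "subgroup ?H G" by (rule generate_is_subgroup) auto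
  have g_in: "g i \<in> ?H" if "i \<in> {1..n}" for i using that by (auto intro: generate.incl)
  have comm_in: "commutator G x y \<in> ?H" if "x \<in> ?H" "y \<in> ?H" for x y
    using that subgroup.m_closed[OF H] subgroup.m_inv_closed[OF H] by (simp add: commutator_def)
  have "c i j \<in> ?H" if "i \<in> {1..n}" "j \<in> {1..n}" for i j
    unfolding c_def using that by (intro comm_in g_in)
  moreover have "D_word w x \<in> ?H" if "w \<in> lists {1..n}" "x \<in> ?H" for w x
    using that
  proof (induction w)
    case (Cons a w)
    then show ?case unfolding D_word_Cons D_def by (intro comm_in g_in) auto
  qed simp
  ultimately have "c_gens \<subseteq> ?H" unfolding c_gens_def by blast
  then have "K \<subseteq> ?H" using K_subset_generate_c_gens generate_subgroup_incl[OF _ H] by blast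
  then have "generate G (g ` {1..n} \<union> K) \<subseteq> ?H"
    using g_in by (intro generate_subgroup_incl[OF _ H]) auto
  then show "carrier G \<subseteq> ?H" by (simp only: generate_g_K_eq_carrier)
qed

end

theorem proposition3p9:
  fixes n :: nat and G :: "('a, 'b) monoid_scheme" and \<phi> :: "'a \<Rightarrow> nat set" and g :: "nat \<Rightarrow> 'a"
  assumes "expansion_group n G \<phi> g"
  shows "finite (carrier G) \<and> finite (Lbul G) \<and> card (carrier G) = card (Lbul G)
    \<and> card (Lbul G) \<le> 2 ^ (n * 2 ^ (n - 1) + n + 1 - 2 ^ n)
    \<and> generate G (g ` {1..n}) = carrier G"
proof -
  interpret expansion G n \<phi> g
    using assms by (simp add: expansion_def expansion_axioms_def expansion_group_def)
  have G: "finite (carrier G)" "card (carrier G) \<le> 2 ^ (n + card basis_index)"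
    using card_carrier_le by auto
  have L: "finite (Lbul G)" "card (Lbul G) = card (carrier G)"
    using card_Lbul[OF G(1) lcs_Suc_Suc_n_trivial] by auto
  show ?thesis using G L card_basis_index generate_g_eq_carrier by simp
qed

end
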